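(* Let $p,\delta\in(0,1)$, $k\ge2$, and let $F$ be a $k$-graph. Let $\mathbf P$ be the property that a $k$-graph $H$ satisfies $t_{\rm inj}(F,H)=p\pm\delta$. Then $\mathbf P$ is testable.
   Context: A $k$-graph is a $k$-uniform hypergraph identified with its edge set. $x=y\pm z$ means $|x-y|\le z$. For $k$-graphs $F,H$ with $|V(H)|=n$, $\mathrm{inj}(F,H)$ is the number of injective maps $f:V(F)\to V(H)$ mapping every edge of $F$ onto an edge of $H$, and $t_{\rm inj}(F,H)=\mathrm{inj}(F,H)/(n)_{|V(F)|}$, where $(n)_r=n(n-1)\cdots(n-r+1)$. For $k$-graphs $G,H$ on a common vertex set of size $n$, they are $\alpha$-close if $|G\triangle H|\le\alpha\binom nk$; an $n$-vertex $H$ is $\alpha$-far from satisfying a property $\mathbf P$ if no $k$-graph on $V(H)$ satisfying $\mathbf P$ is $\alpha$-close to $H$. A property $\mathbf P$ is testable if there is a function $q:(0,1)\to\mathbb N$ such that for every $n$ and $\alpha\in(0,1)$ there is a randomized algorithm that, given an $n$-vertex $k$-graph $H$ via edge queries (asking whether a given $k$-set is an edge), makes at most $q(\alpha)$ queries, accepts with probability at least $2/3$ if $H$ satisfies $\mathbf P$ and rejects with probability at least $2/3$ if $H$ is $\alpha$-far from satisfying $\mathbf P$. *)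

theory Defs
  imports "HOL-Probability.Probability"
begin

definition kgraph :: "nat \<Rightarrow> 'a set \<Rightarrow> 'a set set \<Rightarrow> bool" where
  "kgraph k V E \<longleftrightarrow> (\<forall>e\<in>E. e \<subseteq> V \<and> card e = k)"

definition inj_count :: "'a set \<Rightarrow> 'a set set \<Rightarrow> nat \<Rightarrow> nat set set \<Rightarrow> nat" where
  "inj_count VF EF n H =
     card {f \<in> VF \<rightarrow>\<^sub>E {0..<n}. inj_on f VF \<and> (\<forall>e\<in>EF. f ` e \<in> H)}"

definition falling :: "nat \<Rightarrow> nat \<Rightarrow> real" where
  "falling n r = (\<Prod>i<r. real n - real i)"

definition t_inj :: "'a set \<Rightarrow> 'a set set \<Rightarrow> nat \<Rightarrow> nat set set \<Rightarrow> real" where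
  "t_inj VF EF n H = real (inj_count VF EF n H) / falling n (card VF)"

definition far :: "nat \<Rightarrow> (nat \<Rightarrow> nat set set \<Rightarrow> bool) \<Rightarrow> real \<Rightarrow> nat \<Rightarrow> nat set set \<Rightarrow> bool" where
  "far k P \<alpha> n H \<longleftrightarrow>
     \<not> (\<exists>G. kgraph k {0..<n} G \<and> P n G \<and>
            real (card ((G - H) \<union> (H - G))) \<le> \<alpha> * real (n choose k))"

text \<open>Deterministic adaptive query algorithms: decision trees whose internal
  nodes query whether a set is an edge (first subtree: answer no, second: yes)
  and whose leaves accept (True) or reject (False).\<close>
datatype qtree = Leaf bool | Query "nat set" qtree qtree

fun run :: "qtree \<Rightarrow> nat set set \<Rightarrow> bool" where
  "run (Leaf b) H = b"
| "run (Query e t0 t1) H = (if e \<in> H then run t1 H else run t0 H)"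

fun depth :: "qtree \<Rightarrow> nat" where
  "depth (Leaf b) = 0"
| "depth (Query e t0 t1) = Suc (max (depth t0) (depth t1))"

fun valid_queries :: "nat \<Rightarrow> nat \<Rightarrow> qtree \<Rightarrow> bool" where
  "valid_queries n k (Leaf b) = True"
| "valid_queries n k (Query e t0 t1) =
     (e \<subseteq> {0..<n} \<and> card e = k \<and> valid_queries n k t0 \<and> valid_queries n k t1)"

text \<open>A randomized algorithm is a probability distribution over deterministic
  decision trees; it makes at most q queries if every tree in its support has
  depth at most q.\<close>
definition testable :: "nat \<Rightarrow> (nat \<Rightarrow> nat set set \<Rightarrow> bool) \<Rightarrow> bool" where
  "testable k P \<longleftrightarrow>
     (\<exists>q :: real \<Rightarrow> nat. \<forall>n :: nat. \<forall>\<alpha> :: real. 0 < \<alpha> \<and> \<alpha> < 1 \<longrightarrow>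
        (\<exists>A :: qtree pmf.
           (\<forall>t\<in>set_pmf A. valid_queries n k t \<and> depth t \<le> q \<alpha>) \<and>
           (\<forall>H. kgraph k {0..<n} H \<longrightarrow>
              (P n H \<longrightarrow> measure_pmf.prob A {t. run t H} \<ge> 2/3) \<and>
              (far k P \<alpha> n H \<longrightarrow> measure_pmf.prob A {t. \<not> run t H} \<ge> 2/3))))"

end

theory Submission
  imports Defs
begin

text \<open>The tester samples m independent uniformly random injections of V(F) into the n vertices, queries
  the images of the edges of F and accepts iff the observed fraction of copies of F is within
  \<open>\<delta> + \<gamma>\<close> of p. By Hoeffding's inequality this fraction is \<open>\<gamma>\<close>-close to \<open>t\<^sub>i\<^sub>n\<^sub>j(F,H)\<close> with probability
  at least 2/3, so it remains to show that a host graph with \<open>|t\<^sub>i\<^sub>n\<^sub>j(F,H) - p| \<le> \<delta> + 2\<gamma>\<close> is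
  \<open>\<alpha>\<close>-close to the property. Deleting a suitable set of about \<open>\<alpha> \<cdot> C(n,k)\<close> edges shrinks
  \<open>t\<^sub>i\<^sub>n\<^sub>j\<close> by a factor \<open>1 - \<alpha>/2\<close>, and adding one moves it towards 1 by \<open>(1 - p)(\<alpha>/2)\<^bsup>e(F)\<^esup>\<close>
  (both found by averaging over all edge sets of that size). Since a single edge changes \<open>t\<^sub>i\<^sub>n\<^sub>j\<close>
  by at most \<open>v(F)/n \<le> 2\<delta>\<close>, deleting or adding these edges one at a time passes through the window
  \<open>[p - \<delta>, p + \<delta>]\<close>. Below a threshold on n depending only on \<open>\<alpha>\<close>, the tester queries every k-set.\<close>

fun query_tree :: "nat set list \<Rightarrow> (nat set set \<Rightarrow> bool) \<Rightarrow> nat set set \<Rightarrow> qtree" where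
  "query_tree [] g S = Leaf (g S)"
| "query_tree (e # L) g S = Query e (query_tree L g S) (query_tree L g (insert e S))"

lemma run_query_tree: "run (query_tree L g S) H = g (S \<union> (H \<inter> set L))"
proof (induction L arbitrary: S)
  case (Cons e L)
  have "insert e S \<union> (H \<inter> set L) = S \<union> (H \<inter> set (e # L))" if "e \<in> H"
    using that by auto
  moreover have "S \<union> (H \<inter> set L) = S \<union> (H \<inter> set (e # L))" if "e \<notin> H"
    using that by auto
  ultimately show ?case by (simp only: run.simps query_tree.simps Cons.IH split: if_split) metis
qed simp

lemma depth_query_tree: "depth (query_tree L g S) \<le> length L"
  by (induction L arbitrary: S) (auto simp: max_def)

lemma valid_queries_query_tree:
  "\<forall>e\<in>set L. e \<subseteq> {0..<n} \<and> card e = k \<Longrightarrow> valid_queries n k (query_tree L g S)"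
  by (induction L arbitrary: S) auto

section \<open>Injective maps and copies of F\<close>

definition ksets :: "nat \<Rightarrow> nat \<Rightarrow> nat set set" where
  "ksets n k = {e. e \<subseteq> {0..<n} \<and> card e = k}"

lemma finite_ksets: "finite (ksets n k)"
  unfolding ksets_def by (rule finite_subset[of _ "Pow {0..<n}"]) auto

lemma card_ksets: "card (ksets n k) = n choose k"
  unfolding ksets_def using n_subsets[of "{0..<n}" k] by simp

lemma kgraph_iff_subset_ksets: "kgraph k {0..<n} H \<longleftrightarrow> H \<subseteq> ksets n k"
  unfolding kgraph_def ksets_def by auto

lemma finite_kgraph: "finite V \<Longrightarrow> kgraph k V E \<Longrightarrow> finite E"
  unfolding kgraph_def by (rule finite_subset[of _ "Pow V"]) auto

lemma kgraph_edge_size_le: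
  assumes "finite V" "kgraph k V E" "e \<in> E"
  shows "k \<le> card V"
proof -
  have "e \<subseteq> V" "card e = k" using assms(2,3) unfolding kgraph_def by auto
  then show ?thesis using card_mono[OF assms(1)] by blast
qed

lemma falling_eq_of_nat_prod: "falling n r = real (\<Prod>i<r. n - i)"
proof (cases "r \<le> n")
  case True
  then show ?thesis unfolding falling_def of_nat_prod by (intro prod.cong) (auto simp: of_nat_diff)
next
  case False
  then have "(\<Prod>i<r. real n - real i) = 0" and "(\<Prod>i<r. n - i) = 0"
    by (auto intro!: prod_zero bexI[of _ n])
  then show ?thesis unfolding falling_def by (simp only: of_nat_0)
qed

lemma falling_pos: "r \<le> n \<Longrightarrow> falling n r > 0"
  unfolding falling_def by (intro prod_pos) auto

lemma falling_Suc: "falling n (Suc r) = real n * falling (n - 1) r"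
proof (cases n)
  case 0
  then show ?thesis unfolding falling_def by (auto intro!: prod_zero)
next
  case (Suc m)
  then show ?thesis unfolding falling_def prod.lessThan_Suc_shift by (simp add: algebra_simps)
qed

definition inj_maps :: "'a set \<Rightarrow> nat \<Rightarrow> ('a \<Rightarrow> nat) set" where
  "inj_maps V n = {f \<in> V \<rightarrow>\<^sub>E {0..<n}. inj_on f V}"

lemma finite_inj_maps: "finite V \<Longrightarrow> finite (inj_maps V n)"
  unfolding inj_maps_def by (rule finite_subset[of _ "V \<rightarrow>\<^sub>E {0..<n}"]) (auto intro: finite_PiE)

lemma card_inj_maps:
  assumes "finite V"
  shows "real (card (inj_maps V n)) = falling n (card V)"
proof -
  have "card (inj_maps V n) = n ^ (card V - card V) * (\<Prod>i\<in>{0..<card V}. n - i)"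
    unfolding inj_maps_def using card_inj_on_subset_funcset[OF assms, of "{0..<n}" V] by simp
  then show ?thesis by (simp add: falling_eq_of_nat_prod atLeast0LessThan)
qed

lemma inj_maps_nonempty: "finite V \<Longrightarrow> card V \<le> n \<Longrightarrow> inj_maps V n \<noteq> {}"
  using card_inj_maps[of V n] falling_pos[of "card V" n] by auto

lemma inj_on_restrict_fixing: "inj_on (\<lambda>f. restrict f (V - {x})) {f \<in> inj_maps V n. f x = y}"
proof (rule inj_onI)
  fix f g assume f: "f \<in> {f \<in> inj_maps V n. f x = y}" and g: "g \<in> {f \<in> inj_maps V n. f x = y}"
    and eq: "restrict f (V - {x}) = restrict g (V - {x})"
  show "f = g"
  proof
    fix z
    show "f z = g z"
    proof (cases "z \<in> V - {x}")
      case True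
      then show ?thesis using fun_cong[OF eq, of z] by simp
    next
      case False
      then show ?thesis using f g unfolding inj_maps_def by (auto simp: PiE_def extensional_def)
    qed
  qed
qed

lemma card_inj_maps_fixing_le:
  assumes "finite V" "x \<in> V" "y < n"
  shows "real (card {f \<in> inj_maps V n. f x = y}) \<le> falling (n - 1) (card V - 1)"
proof -
  define Fix where "Fix = {f \<in> inj_maps V n. f x = y}"
  define Rest where "Rest = {g \<in> (V - {x}) \<rightarrow>\<^sub>E ({0..<n} - {y}). inj_on g (V - {x})}"
  have "(\<lambda>f. restrict f (V - {x})) ` Fix \<subseteq> Rest"
  proof
    fix h assume "h \<in> (\<lambda>f. restrict f (V - {x})) ` Fix"
    then obtain f where f: "f \<in> inj_maps V n" "f x = y" and h: "h = restrict f (V - {x})"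
      unfolding Fix_def by auto
    have "\<forall>z\<in>V - {x}. f z \<noteq> y"
      using f assms(2) unfolding inj_maps_def by (auto dest: inj_onD)
    then show "h \<in> Rest"
      using f unfolding h Rest_def inj_maps_def by (auto simp: inj_on_def)
  qed
  moreover have "finite Rest"
    unfolding Rest_def by (rule finite_subset[of _ "(V - {x}) \<rightarrow>\<^sub>E ({0..<n} - {y})"])
      (use assms in \<open>auto intro: finite_PiE\<close>)
  ultimately have "card ((\<lambda>f. restrict f (V - {x})) ` Fix) \<le> card Rest"
    by (intro card_mono)
  then have "card Fix \<le> card Rest"
    unfolding Fix_def card_image[OF inj_on_restrict_fixing] .
  also have "card Rest = (n - 1) ^ 0 * (\<Prod>i\<in>{0..<card V - 1}. (n - 1) - i)"
    unfolding Rest_def using card_inj_on_subset_funcset[of "V - {x}" "{0..<n} - {y}" "V - {x}"] assms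
    by simp
  finally show ?thesis
    unfolding Fix_def falling_eq_of_nat_prod of_nat_le_iff by (simp add: atLeast0LessThan)
qed

definition maps_edges :: "'a set set \<Rightarrow> nat set set \<Rightarrow> ('a \<Rightarrow> nat) \<Rightarrow> bool" where
  "maps_edges EF H f \<longleftrightarrow> (\<forall>e\<in>EF. f ` e \<in> H)"

definition copies :: "'a set \<Rightarrow> 'a set set \<Rightarrow> nat \<Rightarrow> nat set set \<Rightarrow> ('a \<Rightarrow> nat) set" where
  "copies VF EF n H = {f \<in> inj_maps VF n. maps_edges EF H f}"

lemma maps_edges_mono: "maps_edges EF H f \<Longrightarrow> H \<subseteq> H' \<Longrightarrow> maps_edges EF H' f"
  unfolding maps_edges_def by auto

lemma copies_subset_inj_maps: "copies VF EF n H \<subseteq> inj_maps VF n"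
  unfolding copies_def by auto

lemma finite_copies: "finite VF \<Longrightarrow> finite (copies VF EF n H)"
  using finite_subset[OF copies_subset_inj_maps finite_inj_maps] .

lemma copies_mono: "H \<subseteq> H' \<Longrightarrow> copies VF EF n H \<subseteq> copies VF EF n H'"
  unfolding copies_def using maps_edges_mono by blast

lemma t_inj_eq_card_copies:
  assumes "finite VF"
  shows "t_inj VF EF n H = real (card (copies VF EF n H)) / real (card (inj_maps VF n))"
proof -
  have "inj_count VF EF n H = card (copies VF EF n H)"
    unfolding inj_count_def copies_def inj_maps_def maps_edges_def by (rule arg_cong[where f = card]) auto
  then show ?thesis unfolding t_inj_def card_inj_maps[OF assms] by simp
qed

lemma t_inj_nonneg: "finite VF \<Longrightarrow> 0 \<le> t_inj VF EF n H"
  unfolding t_inj_eq_card_copies by simp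

lemma t_inj_le_1: "finite VF \<Longrightarrow> t_inj VF EF n H \<le> 1"
  unfolding t_inj_eq_card_copies
  using card_mono[OF finite_inj_maps copies_subset_inj_maps, of VF EF n H]
  by (cases "card (inj_maps VF n) = 0") (auto simp: divide_le_eq_1)

lemma t_inj_mono: "finite VF \<Longrightarrow> H \<subseteq> H' \<Longrightarrow> t_inj VF EF n H \<le> t_inj VF EF n H'"
  unfolding t_inj_eq_card_copies
  by (simp add: divide_right_mono card_mono[OF finite_copies copies_mono])

lemma t_inj_no_edges: "t_inj VF {} n H = real (card (inj_maps VF n)) / falling n (card VF)"
  unfolding t_inj_def inj_count_def inj_maps_def by simp

lemma t_inj_empty_host: "finite VF \<Longrightarrow> EF \<noteq> {} \<Longrightarrow> t_inj VF EF n {} = 0"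
  unfolding t_inj_eq_card_copies copies_def maps_edges_def by simp

lemma image_edge_in_ksets:
  assumes "kgraph k VF EF" "f \<in> inj_maps VF n" "e \<in> EF"
  shows "f ` e \<in> ksets n k"
proof -
  have "e \<subseteq> VF" "card e = k" using assms(1,3) unfolding kgraph_def by auto
  moreover from this have "inj_on f e"
    using assms(2) unfolding inj_maps_def by (auto intro: inj_on_subset)
  ultimately show ?thesis
    using assms(2) unfolding ksets_def inj_maps_def by (auto simp: card_image)
qed

lemma t_inj_ksets:
  assumes "finite VF" "kgraph k VF EF" "card VF \<le> n"
  shows "t_inj VF EF n (ksets n k) = 1"
proof -
  have "copies VF EF n (ksets n k) = inj_maps VF n"
    unfolding copies_def maps_edges_def using image_edge_in_ksets[OF assms(2)] by blast
  moreover have "real (card (inj_maps VF n)) > 0"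
    unfolding card_inj_maps[OF assms(1)] using falling_pos[OF assms(3)] .
  ultimately show ?thesis unfolding t_inj_eq_card_copies[OF assms(1)] by simp
qed

text \<open>A copy of F that uses the new edge e maps some vertex of F onto a fixed vertex y of e, and
  for each vertex of F only a fraction 1/n of all injections does so.\<close>
lemma card_new_copies_le:
  assumes fin: "finite VF" and kg: "kgraph k VF EF" and "y \<in> e"
  shows "card (copies VF EF n (insert e H) - copies VF EF n H) \<le> (\<Sum>x\<in>VF. card {f \<in> inj_maps VF n. f x = y})"
proof -
  have "copies VF EF n (insert e H) - copies VF EF n H \<subseteq> (\<Union>x\<in>VF. {f \<in> inj_maps VF n. f x = y})"
  proof
    fix f assume f: "f \<in> copies VF EF n (insert e H) - copies VF EF n H"
    then obtain e0 where e0: "e0 \<in> EF" "f ` e0 = e"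
      unfolding copies_def maps_edges_def by auto
    then obtain x where "x \<in> e0" "f x = y" using \<open>y \<in> e\<close> by auto
    moreover have "e0 \<subseteq> VF" using kg e0 unfolding kgraph_def by auto
    ultimately show "f \<in> (\<Union>x\<in>VF. {f \<in> inj_maps VF n. f x = y})"
      using f unfolding copies_def by blast
  qed
  moreover have "finite (\<Union>x\<in>VF. {f \<in> inj_maps VF n. f x = y})"
    by (rule finite_subset[OF _ finite_inj_maps[OF fin]]) blast
  ultimately have "card (copies VF EF n (insert e H) - copies VF EF n H) \<le>
      card (\<Union>x\<in>VF. {f \<in> inj_maps VF n. f x = y})"
    by (intro card_mono)
  also have "\<dots> \<le> (\<Sum>x\<in>VF. card {f \<in> inj_maps VF n. f x = y})"
    by (rule card_UN_le[OF fin])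
  finally show ?thesis .
qed

lemma t_inj_insert_le:
  assumes fin: "finite VF" and kg: "kgraph k VF EF" and "VF \<noteq> {}" and vn: "card VF \<le> n"
    and e: "e \<subseteq> {0..<n}" "e \<noteq> {}"
  shows "t_inj VF EF n (insert e H) \<le> t_inj VF EF n H + real (card VF) / real n"
proof -
  define C1 where "C1 = copies VF EF n (insert e H)"
  define C0 where "C0 = copies VF EF n H"
  obtain y where y: "y \<in> e" using e(2) by blast
  then have "y < n" using e(1) by auto
  have sub: "C0 \<subseteq> C1" unfolding C0_def C1_def by (rule copies_mono) auto
  have fin1: "finite C1" unfolding C1_def by (rule finite_copies[OF fin])
  have "real (card C1) - real (card C0) = real (card (C1 - C0))"
    using card_Diff_subset[OF finite_subset[OF sub fin1] sub] card_mono[OF fin1 sub]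
    by (simp add: of_nat_diff)
  also have "\<dots> \<le> (\<Sum>x\<in>VF. real (card {f \<in> inj_maps VF n. f x = y}))"
    unfolding of_nat_sum[symmetric] of_nat_le_iff C0_def C1_def by (rule card_new_copies_le[OF fin kg y])
  also have "\<dots> \<le> (\<Sum>x\<in>VF. falling (n - 1) (card VF - 1))"
    by (intro sum_mono card_inj_maps_fixing_le[OF fin _ \<open>y < n\<close>])
  finally have "real (card C1) - real (card C0) \<le> real (card VF) * falling (n - 1) (card VF - 1)"
    by simp
  moreover have "falling n (card VF) = real n * falling (n - 1) (card VF - 1)"
    using falling_Suc[of n "card VF - 1"] \<open>VF \<noteq> {}\<close> fin by (simp add: card_gt_0_iff)
  moreover have "falling (n - 1) (card VF - 1) > 0" "real n > 0"
    using vn \<open>VF \<noteq> {}\<close> fin by (auto intro!: falling_pos simp: card_gt_0_iff)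
  ultimately have "(real (card C1) - real (card C0)) / falling n (card VF) \<le> real (card VF) / real n"
    by (simp add: divide_le_eq)
  then show ?thesis
    unfolding t_inj_eq_card_copies[OF fin] card_inj_maps[OF fin] C0_def C1_def
    by (simp add: diff_divide_distrib)
qed

section \<open>Averaging over sets of edges\<close>

lemma discrete_intermediate_value:
  fixes g :: "'b set \<Rightarrow> real"
  assumes "finite X" "g {} < a" "a \<le> g X"
    and "\<And>Y e. Y \<subseteq> X \<Longrightarrow> e \<in> X \<Longrightarrow> g (insert e Y) \<le> g Y + c"
  shows "\<exists>Y\<subseteq>X. a \<le> g Y \<and> g Y \<le> a + c"
  using assms
proof (induction X rule: finite_induct)
  case (insert x F)
  show ?case
  proof (cases "a \<le> g F")
    case True
    then show ?thesis using insert.IH[OF insert.prems(1) True] insert.prems(3) by blast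
  next
    case False
    have "g (insert x F) \<le> g F + c" using insert.prems(3)[of F x] by blast
    then show ?thesis using False insert.prems(2) by (intro exI[of _ "insert x F"]) auto
  qed
qed simp

lemma sum_card_incidences_swap:
  assumes "finite SS" "finite I"
  shows "(\<Sum>X\<in>SS. card {f\<in>I. Q f X}) = (\<Sum>f\<in>I. card {X\<in>SS. Q f X})"
proof -
  have "card {f\<in>I. Q f X} = (\<Sum>f\<in>I. if Q f X then 1 else 0)" for X
    using sum.inter_filter[OF assms(2), of "\<lambda>_. 1::nat" "\<lambda>f. Q f X"] by simp
  moreover have "card {X\<in>SS. Q f X} = (\<Sum>X\<in>SS. if Q f X then 1 else 0)" for f
    using sum.inter_filter[OF assms(1), of "\<lambda>_. 1::nat" "\<lambda>X. Q f X"] by simp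
  ultimately show ?thesis using sum.swap by simp
qed

lemma exists_few_incidences:
  fixes w :: "'b \<Rightarrow> real"
  assumes "finite SS" "SS \<noteq> {}" "finite I"
    and "\<And>f. f \<in> I \<Longrightarrow> real (card {X\<in>SS. Q f X}) \<le> w f * real (card SS)"
  shows "\<exists>X\<in>SS. real (card {f\<in>I. Q f X}) \<le> (\<Sum>f\<in>I. w f)"
proof (rule ccontr)
  assume "\<not> ?thesis"
  then have "(\<Sum>X\<in>SS. \<Sum>f\<in>I. w f) < (\<Sum>X\<in>SS. real (card {f\<in>I. Q f X}))"
    using assms(1,2) by (intro sum_strict_mono) auto
  also have "\<dots> = (\<Sum>f\<in>I. real (card {X\<in>SS. Q f X}))"
    by (simp only: of_nat_sum[symmetric] sum_card_incidences_swap[OF assms(1,3)])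
  also have "\<dots> \<le> (\<Sum>f\<in>I. w f * real (card SS))"
    by (intro sum_mono assms(4))
  finally show False by (simp add: sum_distrib_right mult.commute)
qed

lemma exists_many_incidences:
  fixes w :: "'b \<Rightarrow> real"
  assumes "finite SS" "SS \<noteq> {}" "finite I"
    and "\<And>f. f \<in> I \<Longrightarrow> w f * real (card SS) \<le> real (card {X\<in>SS. Q f X})"
  shows "\<exists>X\<in>SS. (\<Sum>f\<in>I. w f) \<le> real (card {f\<in>I. Q f X})"
proof (rule ccontr)
  assume "\<not> ?thesis"
  then have "(\<Sum>X\<in>SS. real (card {f\<in>I. Q f X})) < (\<Sum>X\<in>SS. \<Sum>f\<in>I. w f)"
    using assms(1,2) by (intro sum_strict_mono) auto
  moreover have "(\<Sum>X\<in>SS. real (card {f\<in>I. Q f X})) = (\<Sum>f\<in>I. real (card {X\<in>SS. Q f X}))"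
    by (simp only: of_nat_sum[symmetric] sum_card_incidences_swap[OF assms(1,3)])
  moreover have "(\<Sum>f\<in>I. w f * real (card SS)) \<le> (\<Sum>f\<in>I. real (card {X\<in>SS. Q f X}))"
    by (intro sum_mono assms(4))
  ultimately show False by (simp add: sum_distrib_right mult.commute)
qed

lemma card_subsets_containing:
  assumes "finite U" "M \<subseteq> U" and that: "card M \<le> s"
  shows "card {X. X \<subseteq> U \<and> card X = s \<and> M \<subseteq> X} = (card U - card M) choose (s - card M)"
proof -
  have finM: "finite M" using assms finite_subset by blast
  have bij: "bij_betw (\<lambda>X. X - M) {X. X \<subseteq> U \<and> card X = s \<and> M \<subseteq> X} {Y. Y \<subseteq> U - M \<and> card Y = s - card M}"
  proof (rule bij_betw_imageI)
    show "inj_on (\<lambda>X. X - M) {X. X \<subseteq> U \<and> card X = s \<and> M \<subseteq> X}"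
      by (rule inj_onI) blast
    show "(\<lambda>X. X - M) ` {X. X \<subseteq> U \<and> card X = s \<and> M \<subseteq> X} = {Y. Y \<subseteq> U - M \<and> card Y = s - card M}"
    proof
      show "(\<lambda>X. X - M) ` {X. X \<subseteq> U \<and> card X = s \<and> M \<subseteq> X} \<subseteq> {Y. Y \<subseteq> U - M \<and> card Y = s - card M}"
        using finM by (auto simp: card_Diff_subset)
      show "{Y. Y \<subseteq> U - M \<and> card Y = s - card M} \<subseteq> (\<lambda>X. X - M) ` {X. X \<subseteq> U \<and> card X = s \<and> M \<subseteq> X}"
      proof
        fix Y assume Y: "Y \<in> {Y. Y \<subseteq> U - M \<and> card Y = s - card M}"
        have finY: "finite Y" using Y assms(1) finite_subset by blast
        have "card (Y \<union> M) = card Y + card M" using Y finY finM by (intro card_Un_disjoint) auto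
        then have "card (Y \<union> M) = s" using Y that by simp
        moreover have "Y = (Y \<union> M) - M" using Y by auto
        ultimately show "Y \<in> (\<lambda>X. X - M) ` {X. X \<subseteq> U \<and> card X = s \<and> M \<subseteq> X}"
          using Y assms by blast
      qed
    qed
  qed
  have "card {X. X \<subseteq> U \<and> card X = s \<and> M \<subseteq> X} = card {Y. Y \<subseteq> U - M \<and> card Y = s - card M}"
    by (rule bij_betw_same_card[OF bij])
  also have "\<dots> = card (U - M) choose (s - card M)" using assms by (intro n_subsets) auto
  also have "card (U - M) = card U - card M" using assms finM by (simp add: card_Diff_subset)
  finally show ?thesis .
qed

lemma binomial_mult_pow_le:
  "m \<le> s \<Longrightarrow> s \<le> N \<Longrightarrow> (N choose s) * (s - m) ^ m \<le> ((N - m) choose (s - m)) * N ^ m"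
proof (induction m arbitrary: N s)
  case (Suc m)
  obtain N' s' where N: "N = Suc N'" and s: "s = Suc s'" using Suc.prems
    by (metis Suc_le_D le_trans)
  have IH: "(N' choose s') * (s' - m) ^ m \<le> ((N' - m) choose (s' - m)) * N' ^ m"
    using Suc.prems N s by (intro Suc.IH) auto
  have "(N choose s) * s = (N' choose s') * N"
    unfolding N s by (metis Suc_times_binomial_eq mult.commute)
  have "(N choose s) * (s - Suc m) ^ Suc m = (N choose s) * (s - Suc m) * (s' - m) ^ m"
    using s by simp
  also have "\<dots> \<le> (N choose s) * s * (s' - m) ^ m" by (intro mult_le_mono) auto
  also have "\<dots> = N * ((N' choose s') * (s' - m) ^ m)"
    using \<open>(N choose s) * s = (N' choose s') * N\<close> by (simp add: ac_simps)
  also have "\<dots> \<le> N * (((N' - m) choose (s' - m)) * N' ^ m)" using IH by simp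
  also have "\<dots> \<le> N * (((N' - m) choose (s' - m)) * N ^ m)" using N by (intro mult_le_mono power_mono) auto
  also have "\<dots> = ((N - Suc m) choose (s - Suc m)) * N ^ Suc m" using N s by (simp add: algebra_simps)
  finally show ?case .
qed simp

lemma binomial_containing_ge:
  assumes "m \<le> E" "E \<le> s" "s \<le> N" "N \<le> K" "0 < N"
  shows "real (N choose s) * ((real s - real E) / real K) ^ E \<le> real ((N - m) choose (s - m))"
proof -
  define r where "r = (real s - real E) / real K"
  have r0: "0 \<le> r" unfolding r_def using assms(2) by simp
  have r1: "r \<le> 1" unfolding r_def using assms by (simp add: divide_le_eq_1)
  have "r ^ E \<le> r ^ m" by (rule power_decreasing[OF assms(1) r0 r1])
  also have "r \<le> real (s - m) / real N"
  proof -
    have "r \<le> (real s - real E) / real N"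
      unfolding r_def using assms by (intro divide_left_mono) simp_all
    also have "\<dots> \<le> real (s - m) / real N"
      using assms by (intro divide_right_mono) (simp_all add: of_nat_diff)
    finally show ?thesis .
  qed
  then have "r ^ m \<le> (real (s - m) / real N) ^ m" using r0 by (rule power_mono)
  finally have "real (N choose s) * r ^ E \<le> real (N choose s) * (real (s - m) / real N) ^ m"
    by (intro mult_left_mono) simp_all
  also have "\<dots> = real (N choose s) * real (s - m) ^ m / real N ^ m"
    by (simp add: power_divide)
  also have "\<dots> \<le> real ((N - m) choose (s - m))"
  proof -
    have "real (N choose s) * real (s - m) ^ m \<le> real ((N - m) choose (s - m)) * real N ^ m"
      unfolding of_nat_power[symmetric] of_nat_mult[symmetric] of_nat_le_iff
      using assms by (intro binomial_mult_pow_le) simp_all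
    then show ?thesis using assms(5) by (simp add: pos_divide_le_eq)
  qed
  finally show ?thesis unfolding r_def .
qed

lemma sum_if_member:
  fixes a b :: real
  assumes "finite I" "C \<subseteq> I"
  shows "(\<Sum>f\<in>I. if f \<in> C then a else b) = real (card C) * a + (real (card I) - real (card C)) * b"
proof -
  have "(\<Sum>f\<in>I. if f \<in> C then a else b) = real (card C) * a + real (card (I - C)) * b"
    using assms by (simp add: sum.If_cases Int_absorb2 Int_absorb1 Diff_eq[symmetric] Int_commute)
  moreover have "card (I - C) = card I - card C" "card C \<le> card I"
    using assms finite_subset[OF assms(2,1)] by (simp_all add: card_Diff_subset card_mono)
  ultimately show ?thesis by (simp add: of_nat_diff)
qed

lemma card_deletions_keeping_copy_le:
  assumes "finite H" "EF \<noteq> {}" "f \<in> copies VF EF n H"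
  shows "card {X. X \<subseteq> H \<and> card X = s \<and> f \<in> copies VF EF n (H - X)} \<le> (card H - 1) choose s"
proof -
  obtain e where "e \<in> EF" using assms(2) by blast
  then have "f ` e \<in> H" using assms(3) unfolding copies_def maps_edges_def by auto
  have "{X. X \<subseteq> H \<and> card X = s \<and> f \<in> copies VF EF n (H - X)} \<subseteq> {X. X \<subseteq> H - {f ` e} \<and> card X = s}"
    using \<open>e \<in> EF\<close> unfolding copies_def maps_edges_def by auto
  then have "card {X. X \<subseteq> H \<and> card X = s \<and> f \<in> copies VF EF n (H - X)} \<le>
      card {X. X \<subseteq> H - {f ` e} \<and> card X = s}"
    using assms(1) by (intro card_mono) (auto simp: finite_Collect_subsets)
  also have "\<dots> = (card H - 1) choose s"
    using assms(1) \<open>f ` e \<in> H\<close> by (simp add: n_subsets)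
  finally show ?thesis .
qed

lemma t_inj_delete_subset:
  assumes fin: "finite VF" and "EF \<noteq> {}" and finH: "finite H" and s: "s \<le> card H"
  shows "\<exists>X\<subseteq>H. card X = s \<and>
    t_inj VF EF n (H - X) \<le> t_inj VF EF n H * (1 - real s / real (card H))"
proof (cases "H = {}")
  case True
  then show ?thesis using s by (intro exI[of _ "{}"]) auto
next
  case False
  define h where "h = card H"
  have "h > 0" using False finH h_def by (simp add: card_gt_0_iff)
  define SS where "SS = {X. X \<subseteq> H \<and> card X = s}"
  have cSS: "card SS = h choose s" unfolding SS_def h_def by (rule n_subsets[OF finH])
  have finSS: "finite SS" unfolding SS_def using finH by (simp add: finite_Collect_subsets)
  have "SS \<noteq> {}" using cSS s h_def by (auto simp: zero_less_binomial_iff)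
  have "real ((h - 1) choose s) = (1 - real s / real h) * real (h choose s)"
  proof -
    have "real (h - s) * real (h choose s) = real h * real ((h - 1) choose s)"
      by (metis binomial_absorb_comp of_nat_mult)
    then show ?thesis using \<open>h > 0\<close> s h_def by (simp add: field_simps of_nat_diff)
  qed
  then have each: "real (card {X\<in>SS. f \<in> copies VF EF n (H - X)}) \<le>
      (if f \<in> copies VF EF n H then 1 - real s / real h else 0) * real (card SS)" for f
  proof (cases "f \<in> copies VF EF n H")
    case True
    then show ?thesis
      using card_deletions_keeping_copy_le[OF finH \<open>EF \<noteq> {}\<close> True, of s]
        \<open>real ((h - 1) choose s) = _\<close> cSS
      unfolding SS_def h_def by (simp add: of_nat_le_iff[symmetric])
  next
    case False
    then have "{X\<in>SS. f \<in> copies VF EF n (H - X)} = {}"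
      using copies_mono[of "H - _" H VF EF n] by blast
    then have "card {X\<in>SS. f \<in> copies VF EF n (H - X)} = 0" by (simp only: card.empty)
    with False show ?thesis by simp
  qed
  obtain X where "X \<in> SS" and X: "real (card {f\<in>inj_maps VF n. f \<in> copies VF EF n (H - X)}) \<le>
      (\<Sum>f\<in>inj_maps VF n. if f \<in> copies VF EF n H then 1 - real s / real h else 0)"
    using exists_few_incidences[where Q = "\<lambda>f X. f \<in> copies VF EF n (H - X)",
        OF finSS \<open>SS \<noteq> {}\<close> finite_inj_maps[OF fin] each] by blast
  have "{f\<in>inj_maps VF n. f \<in> copies VF EF n (H - X)} = copies VF EF n (H - X)"
    using copies_subset_inj_maps by blast
  then have "real (card (copies VF EF n (H - X))) \<le> real (card (copies VF EF n H)) * (1 - real s / real h)"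
    using X by (simp add: sum_if_member[OF finite_inj_maps[OF fin] copies_subset_inj_maps])
  then have "t_inj VF EF n (H - X) \<le> t_inj VF EF n H * (1 - real s / real h)"
    unfolding t_inj_eq_card_copies[OF fin] by (simp add: divide_right_mono)
  then show ?thesis using \<open>X \<in> SS\<close> unfolding SS_def h_def by blast
qed

lemma card_additions_completing_copy_ge:
  assumes fin: "finite VF" and kg: "kgraph k VF EF" and "EF \<noteq> {}" and f: "f \<in> inj_maps VF n"
    and s: "card EF \<le> s" "s \<le> card (ksets n k - H)"
  shows "real (card (ksets n k - H) choose s) * ((real s - real (card EF)) / real (n choose k)) ^ card EF
    \<le> real (card {X. X \<subseteq> ksets n k - H \<and> card X = s \<and> f \<in> copies VF EF n (H \<union> X)})"
proof -
  define U where "U = ksets n k - H"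
  define M where "M = (\<lambda>e. f ` e) ` EF - H"
  have finU: "finite U" unfolding U_def using finite_ksets by simp
  have "M \<subseteq> U" using image_edge_in_ksets[OF kg f] unfolding M_def U_def by auto
  have "card M \<le> card EF"
    unfolding M_def using finite_kgraph[OF fin kg] by (meson card_image_le card_mono Diff_subset
      finite_imageI le_trans)
  have "{X. X \<subseteq> U \<and> card X = s \<and> f \<in> copies VF EF n (H \<union> X)} = {X. X \<subseteq> U \<and> card X = s \<and> M \<subseteq> X}"
    using f unfolding copies_def maps_edges_def M_def U_def by auto
  then have "card {X. X \<subseteq> U \<and> card X = s \<and> f \<in> copies VF EF n (H \<union> X)} =
      (card U - card M) choose (s - card M)"
    using card_subsets_containing[OF finU \<open>M \<subseteq> U\<close>] \<open>card M \<le> card EF\<close> s by simp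
  moreover have "card U \<le> n choose k"
    unfolding U_def card_ksets[symmetric] using finite_ksets by (simp add: card_mono)
  moreover have "0 < card EF" using \<open>EF \<noteq> {}\<close> finite_kgraph[OF fin kg] by (simp add: card_gt_0_iff)
  ultimately show ?thesis
    using \<open>card M \<le> card EF\<close> s unfolding U_def by (simp add: binomial_containing_ge)
qed

lemma t_inj_add_subset:
  assumes fin: "finite VF" and kg: "kgraph k VF EF" and vn: "card VF \<le> n" and "EF \<noteq> {}"
    and s: "card EF \<le> s" "s \<le> card (ksets n k - H)"
  shows "\<exists>X\<subseteq>ksets n k - H. card X = s \<and>
     t_inj VF EF n H + (1 - t_inj VF EF n H) *
        ((real s - real (card EF)) / real (n choose k)) ^ card EF \<le> t_inj VF EF n (H \<union> X)"
proof -
  define \<rho> where "\<rho> = ((real s - real (card EF)) / real (n choose k)) ^ card EF"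
  define I where "I = inj_maps VF n"
  define SS where "SS = {X. X \<subseteq> ksets n k - H \<and> card X = s}"
  have cSS: "card SS = card (ksets n k - H) choose s"
    unfolding SS_def by (rule n_subsets) (simp add: finite_ksets)
  have finSS: "finite SS" unfolding SS_def by (simp add: finite_ksets finite_Collect_subsets)
  have "SS \<noteq> {}" using cSS s by (auto simp: zero_less_binomial_iff)
  have finI: "finite I" unfolding I_def by (rule finite_inj_maps[OF fin])
  have "real (card I) > 0" unfolding I_def card_inj_maps[OF fin] by (rule falling_pos[OF vn])
  have each: "(if f \<in> copies VF EF n H then 1 else \<rho>) * real (card SS) \<le>
      real (card {X\<in>SS. f \<in> copies VF EF n (H \<union> X)})" if "f \<in> I" for f
  proof (cases "f \<in> copies VF EF n H")
    case True
    then have "{X\<in>SS. f \<in> copies VF EF n (H \<union> X)} = SS"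
      using copies_mono[of H "H \<union> _" VF EF n] by blast
    then show ?thesis using True by simp
  next
    case False
    then show ?thesis
      using card_additions_completing_copy_ge[OF fin kg \<open>EF \<noteq> {}\<close> that[unfolded I_def] s] cSS
      unfolding SS_def \<rho>_def by (simp add: mult.commute conj_assoc)
  qed
  obtain X where "X \<in> SS" and X: "(\<Sum>f\<in>I. if f \<in> copies VF EF n H then 1 else \<rho>) \<le>
      real (card {f\<in>I. f \<in> copies VF EF n (H \<union> X)})"
    using exists_many_incidences[where Q = "\<lambda>f X. f \<in> copies VF EF n (H \<union> X)",
        OF finSS \<open>SS \<noteq> {}\<close> finI each] by blast
  have "{f\<in>I. f \<in> copies VF EF n (H \<union> X)} = copies VF EF n (H \<union> X)"
    unfolding I_def using copies_subset_inj_maps by blast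
  then have "real (card (copies VF EF n H)) + (real (card I) - real (card (copies VF EF n H))) * \<rho> \<le>
      real (card (copies VF EF n (H \<union> X)))"
    using X by (simp add: sum_if_member[OF finI copies_subset_inj_maps[of VF EF n H, folded I_def]])
  then have "(real (card (copies VF EF n H)) + (real (card I) - real (card (copies VF EF n H))) * \<rho>)
      / real (card I) \<le> t_inj VF EF n (H \<union> X)"
    unfolding t_inj_eq_card_copies[OF fin] I_def[symmetric] by (simp add: divide_right_mono)
  moreover have "(real (card (copies VF EF n H)) + (real (card I) - real (card (copies VF EF n H))) * \<rho>)
      / real (card I) = t_inj VF EF n H + (1 - t_inj VF EF n H) * \<rho>"
    using \<open>real (card I) > 0\<close> unfolding t_inj_eq_card_copies[OF fin] I_def[symmetric]
    by (simp add: field_simps)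
  ultimately show ?thesis using \<open>X \<in> SS\<close> unfolding SS_def \<rho>_def by auto
qed

section \<open>Repairing a host graph\<close>

lemma t_inj_walk_up:
  assumes fin: "finite VF" and kg: "kgraph k VF EF" and "VF \<noteq> {}" "card VF \<le> n" "1 \<le> k"
    and X: "X \<subseteq> ksets n k" and "t_inj VF EF n H < a" "a \<le> t_inj VF EF n (H \<union> X)"
  shows "\<exists>Y\<subseteq>X. a \<le> t_inj VF EF n (H \<union> Y) \<and> t_inj VF EF n (H \<union> Y) \<le> a + real (card VF) / real n"
proof (rule discrete_intermediate_value[where g = "\<lambda>Y. t_inj VF EF n (H \<union> Y)"])
  show "finite X" using finite_subset[OF X finite_ksets] .
  fix Y e assume "e \<in> X"
  then have "e \<subseteq> {0..<n}" "e \<noteq> {}" using X \<open>1 \<le> k\<close> unfolding ksets_def by auto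
  then show "t_inj VF EF n (H \<union> insert e Y) \<le> t_inj VF EF n (H \<union> Y) + real (card VF) / real n"
    using t_inj_insert_le[OF fin kg assms(3,4)] by simp
qed (use assms in simp_all)

lemma t_inj_walk_down:
  assumes fin: "finite VF" and kg: "kgraph k VF EF" and "VF \<noteq> {}" "card VF \<le> n" "1 \<le> k"
    and X: "X \<subseteq> ksets n k" and "t_inj VF EF n (H - X) \<le> a" "a < t_inj VF EF n H"
  shows "\<exists>Y\<subseteq>X. a - real (card VF) / real n \<le> t_inj VF EF n (H - Y) \<and> t_inj VF EF n (H - Y) \<le> a"
proof -
  have "\<exists>Y\<subseteq>X. - a \<le> - t_inj VF EF n (H - Y) \<and> - t_inj VF EF n (H - Y) \<le> - a + real (card VF) / real n"
  proof (rule discrete_intermediate_value[where g = "\<lambda>Y. - t_inj VF EF n (H - Y)"])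
    show "finite X" using finite_subset[OF X finite_ksets] .
    fix Y e assume "e \<in> X"
    then have "e \<subseteq> {0..<n}" "e \<noteq> {}" using X \<open>1 \<le> k\<close> unfolding ksets_def by auto
    have "t_inj VF EF n (H - Y) \<le> t_inj VF EF n (insert e (H - insert e Y))"
      by (rule t_inj_mono[OF fin]) auto
    also have "\<dots> \<le> t_inj VF EF n (H - insert e Y) + real (card VF) / real n"
      using t_inj_insert_le[OF fin kg assms(3,4) \<open>e \<subseteq> {0..<n}\<close> \<open>e \<noteq> {}\<close>] .
    finally show "- t_inj VF EF n (H - insert e Y) \<le> - t_inj VF EF n (H - Y) + real (card VF) / real n"
      by simp
  qed (use assms in simp_all)
  then show ?thesis by auto
qed

lemma real_nat_floor_bounds:
  fixes x :: real
  assumes "0 \<le> x"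
  shows "real (nat \<lfloor>x\<rfloor>) \<le> x" "x - 1 < real (nat \<lfloor>x\<rfloor>)"
  using assms real_of_int_floor_gt_diff_one[of x] by simp_all

lemma exists_deletion_reaching:
  assumes fin: "finite VF" and "EF \<noteq> {}" and HK: "H \<subseteq> ksets n k" and "0 < \<alpha>"
    and big: "2 * (real (card EF) + 1) \<le> \<alpha> * real (n choose k)"
    and "0 \<le> p" "0 \<le> \<delta>" and above: "p \<le> t_inj VF EF n H" "t_inj VF EF n H \<le> p + \<delta> + p * \<alpha> / 2"
  shows "\<exists>X\<subseteq>H. real (card X) \<le> \<alpha> * real (n choose k) \<and> t_inj VF EF n (H - X) \<le> p + \<delta>"
proof -
  define B where "B = real (n choose k)"
  define s where "s = nat \<lfloor>\<alpha> * B\<rfloor>"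
  have big': "2 * (real (card EF) + 1) \<le> \<alpha> * B" using big unfolding B_def .
  have s_le: "real s \<le> \<alpha> * B" and "\<alpha> * B - 1 < real s"
    unfolding s_def B_def using real_nat_floor_bounds \<open>0 < \<alpha>\<close> by simp_all
  then have s_ge: "\<alpha> * B / 2 \<le> real s" using big' by (simp add: add_nonneg_nonneg)
  have finH: "finite H" using finite_subset[OF HK finite_ksets] .
  show ?thesis
  proof (cases "s \<le> card H")
    case True
    obtain X where X: "X \<subseteq> H" "card X = s"
      and tX: "t_inj VF EF n (H - X) \<le> t_inj VF EF n H * (1 - real s / real (card H))"
      using t_inj_delete_subset[OF fin \<open>EF \<noteq> {}\<close> finH True] by blast
    have "0 < B" using big' unfolding B_def by (cases "n choose k") simp_all
    have "card H \<le> n choose k" using card_mono[OF finite_ksets HK] card_ksets by metis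
    have "0 < real s" using s_ge big' by simp
    have "\<alpha> / 2 \<le> real s / B" using s_ge \<open>0 < B\<close> by (simp add: field_simps)
    also have "\<dots> \<le> real s / real (card H)"
    proof (intro divide_left_mono)
      show "0 < B * real (card H)" using \<open>0 < B\<close> True \<open>0 < real s\<close> by simp
    qed (use \<open>card H \<le> n choose k\<close> in \<open>simp_all add: B_def\<close>)
    finally have "\<alpha> / 2 \<le> real s / real (card H)" .
    then have "t_inj VF EF n (H - X) \<le> t_inj VF EF n H * (1 - \<alpha> / 2)"
      using tX t_inj_nonneg[OF fin, of EF n H] by (smt (verit) mult_left_mono)
    also have "\<dots> \<le> p + \<delta>"
    proof -
      have "p * \<alpha> \<le> t_inj VF EF n H * \<alpha>" using above(1) \<open>0 < \<alpha>\<close> by simp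
      then show ?thesis using above(2) by (simp add: algebra_simps)
    qed
    finally show ?thesis using X s_le unfolding B_def by auto
  next
    case False
    then show ?thesis
      using s_le t_inj_empty_host[OF fin \<open>EF \<noteq> {}\<close>] \<open>0 \<le> p\<close> \<open>0 \<le> \<delta>\<close>
      unfolding B_def by (intro exI[of _ H]) auto
  qed
qed

lemma exists_addition_reaching:
  assumes fin: "finite VF" and kg: "kgraph k VF EF" and vn: "card VF \<le> n" and "EF \<noteq> {}"
    and HK: "H \<subseteq> ksets n k" and "0 < \<alpha>"
    and big: "2 * (real (card EF) + 1) \<le> \<alpha> * real (n choose k)"
    and "p \<le> 1" "0 \<le> \<delta>" and below: "t_inj VF EF n H \<le> p"
      "p - \<delta> \<le> t_inj VF EF n H + (1 - p) * (\<alpha> / 2) ^ card EF"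
  shows "\<exists>X\<subseteq>ksets n k - H. real (card X) \<le> \<alpha> * real (n choose k) \<and> p - \<delta> \<le> t_inj VF EF n (H \<union> X)"
proof -
  define B where "B = real (n choose k)"
  define E where "E = card EF"
  define s where "s = nat \<lfloor>\<alpha> * B\<rfloor>"
  have big': "2 * (real E + 1) \<le> \<alpha> * B" using big unfolding B_def E_def .
  have "0 < B" using big' unfolding B_def by (cases "n choose k") simp_all
  have s_le: "real s \<le> \<alpha> * B" and s_gt: "\<alpha> * B - 1 < real s"
    unfolding s_def B_def using real_nat_floor_bounds \<open>0 < \<alpha>\<close> by simp_all
  show ?thesis
  proof (cases "s \<le> card (ksets n k - H)")
    case True
    have "E \<le> s" using s_gt big' by simp
    obtain X where X: "X \<subseteq> ksets n k - H" "card X = s" and tX: "t_inj VF EF n H + (1 - t_inj VF EF n H) *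
        ((real s - real E) / B) ^ E \<le> t_inj VF EF n (H \<union> X)"
      using t_inj_add_subset[OF fin kg vn \<open>EF \<noteq> {}\<close> \<open>E \<le> s\<close>[unfolded E_def] True]
      unfolding B_def E_def by blast
    have "\<alpha> / 2 \<le> (real s - real E) / B"
      using s_gt big' \<open>0 < B\<close> by (simp add: field_simps)
    then have "(\<alpha> / 2) ^ E \<le> ((real s - real E) / B) ^ E"
      using \<open>0 < \<alpha>\<close> by (intro power_mono) simp_all
    moreover have "1 - p \<le> 1 - t_inj VF EF n H" using below(1) by simp
    ultimately have "(1 - p) * (\<alpha> / 2) ^ E \<le> (1 - t_inj VF EF n H) * ((real s - real E) / B) ^ E"
      using \<open>p \<le> 1\<close> \<open>0 < \<alpha>\<close> by (intro mult_mono) simp_all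
    then have "p - \<delta> \<le> t_inj VF EF n (H \<union> X)" using tX below(2) unfolding E_def by simp
    then show ?thesis using X s_le unfolding B_def by auto
  next
    case False
    have "H \<union> (ksets n k - H) = ksets n k" using HK by auto
    then have "t_inj VF EF n (H \<union> (ksets n k - H)) = 1" using t_inj_ksets[OF fin kg vn] by simp
    then show ?thesis using False s_le \<open>p \<le> 1\<close> \<open>0 \<le> \<delta>\<close> unfolding B_def
      by (intro exI[of _ "ksets n k - H"]) auto
  qed
qed

text \<open>The margin keeps \<open>2\<gamma>\<close> below both the guaranteed decrease \<open>p\<alpha>/2\<close> of a deletion and
  the guaranteed increase \<open>(1 - p)(\<alpha>/2)\<^bsup>e(F)\<^esup>\<close> of an addition.\<close>
definition repair_margin :: "real \<Rightarrow> real \<Rightarrow> nat \<Rightarrow> real" where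
  "repair_margin p \<alpha> E = min (p * \<alpha> / 4) ((1 - p) * (\<alpha> / 2) ^ E / 2)"

lemma repair_margin_pos: "0 < p \<Longrightarrow> p < 1 \<Longrightarrow> 0 < \<alpha> \<Longrightarrow> 0 < repair_margin p \<alpha> E"
  unfolding repair_margin_def by simp

lemma repair_from_above:
  assumes fin: "finite VF" and kg: "kgraph k VF EF" and "VF \<noteq> {}" "EF \<noteq> {}" "1 \<le> k"
    and "0 \<le> p" "0 \<le> \<delta>" "0 < \<alpha>"
    and vn: "card VF \<le> n" and step: "real (card VF) / real n \<le> 2 * \<delta>"
    and big: "2 * (real (card EF) + 1) \<le> \<alpha> * real (n choose k)"
    and HK: "H \<subseteq> ksets n k" and above: "p + \<delta> < t_inj VF EF n H" "t_inj VF EF n H \<le> p + \<delta> + p * \<alpha> / 2"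
  shows "\<exists>G\<subseteq>ksets n k. \<bar>t_inj VF EF n G - p\<bar> \<le> \<delta> \<and>
    real (card ((G - H) \<union> (H - G))) \<le> \<alpha> * real (n choose k)"
proof -
  have "p \<le> t_inj VF EF n H" using above(1) \<open>0 \<le> \<delta>\<close> by simp
  then obtain X where X: "X \<subseteq> H" "real (card X) \<le> \<alpha> * real (n choose k)"
      "t_inj VF EF n (H - X) \<le> p + \<delta>"
    using exists_deletion_reaching[OF fin \<open>EF \<noteq> {}\<close> HK \<open>0 < \<alpha>\<close> big \<open>0 \<le> p\<close> \<open>0 \<le> \<delta>\<close>] above(2)
    by blast
  then obtain Y where Y: "Y \<subseteq> X" "p + \<delta> - real (card VF) / real n \<le> t_inj VF EF n (H - Y)"
      "t_inj VF EF n (H - Y) \<le> p + \<delta>"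
    using t_inj_walk_down[OF fin kg assms(3) vn \<open>1 \<le> k\<close>, of X H "p + \<delta>"] HK above(1) by blast
  have "(H - Y - H) \<union> (H - (H - Y)) = Y" using X(1) Y(1) by blast
  moreover have "card Y \<le> card X"
    using finite_subset[OF X(1) finite_subset[OF HK finite_ksets]] Y(1) by (rule card_mono)
  moreover have "\<bar>t_inj VF EF n (H - Y) - p\<bar> \<le> \<delta>" using Y step unfolding abs_le_iff by linarith
  moreover have "H - Y \<subseteq> ksets n k" using HK by blast
  ultimately show ?thesis using X(2) by (intro exI[of _ "H - Y"]) (simp add: order_trans)
qed

lemma repair_from_below:
  assumes fin: "finite VF" and kg: "kgraph k VF EF" and "VF \<noteq> {}" "EF \<noteq> {}" "1 \<le> k"
    and "p \<le> 1" "0 \<le> \<delta>" "0 < \<alpha>"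
    and vn: "card VF \<le> n" and step: "real (card VF) / real n \<le> 2 * \<delta>"
    and big: "2 * (real (card EF) + 1) \<le> \<alpha> * real (n choose k)"
    and HK: "H \<subseteq> ksets n k"
    and below: "t_inj VF EF n H < p - \<delta>" "p - \<delta> \<le> t_inj VF EF n H + (1 - p) * (\<alpha> / 2) ^ card EF"
  shows "\<exists>G\<subseteq>ksets n k. \<bar>t_inj VF EF n G - p\<bar> \<le> \<delta> \<and>
    real (card ((G - H) \<union> (H - G))) \<le> \<alpha> * real (n choose k)"
proof -
  have "t_inj VF EF n H \<le> p" using below(1) \<open>0 \<le> \<delta>\<close> by simp
  then obtain X where X: "X \<subseteq> ksets n k - H" "real (card X) \<le> \<alpha> * real (n choose k)"
      "p - \<delta> \<le> t_inj VF EF n (H \<union> X)"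
    using exists_addition_reaching[OF fin kg vn \<open>EF \<noteq> {}\<close> HK \<open>0 < \<alpha>\<close> big \<open>p \<le> 1\<close> \<open>0 \<le> \<delta>\<close>] below(2)
    by blast
  then obtain Y where Y: "Y \<subseteq> X" "p - \<delta> \<le> t_inj VF EF n (H \<union> Y)"
      "t_inj VF EF n (H \<union> Y) \<le> p - \<delta> + real (card VF) / real n"
    using t_inj_walk_up[OF fin kg assms(3) vn \<open>1 \<le> k\<close>, of X H "p - \<delta>"] below(1) by blast
  have "(H \<union> Y - H) \<union> (H - (H \<union> Y)) = Y" using X(1) Y(1) by blast
  moreover have "card Y \<le> card X"
    using finite_subset[OF X(1) finite_Diff[OF finite_ksets]] Y(1) by (rule card_mono)
  moreover have "\<bar>t_inj VF EF n (H \<union> Y) - p\<bar> \<le> \<delta>" using Y step unfolding abs_le_iff by linarith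
  moreover have "H \<union> Y \<subseteq> ksets n k" using HK X(1) Y(1) by blast
  ultimately show ?thesis using X(2) by (intro exI[of _ "H \<union> Y"]) (simp add: order_trans)
qed

lemma t_inj_repair:
  assumes fin: "finite VF" and kg: "kgraph k VF EF" and "EF \<noteq> {}" "1 \<le> k"
    and "0 \<le> p" "p \<le> 1" "0 \<le> \<delta>" "0 < \<alpha>"
    and vn: "card VF \<le> n" and step: "real (card VF) / real n \<le> 2 * \<delta>"
    and big: "2 * (real (card EF) + 1) \<le> \<alpha> * real (n choose k)"
    and HK: "H \<subseteq> ksets n k"
    and near: "\<bar>t_inj VF EF n H - p\<bar> \<le> \<delta> + 2 * repair_margin p \<alpha> (card EF)"
  shows "\<exists>G\<subseteq>ksets n k. \<bar>t_inj VF EF n G - p\<bar> \<le> \<delta> \<and>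
    real (card ((G - H) \<union> (H - G))) \<le> \<alpha> * real (n choose k)"
proof -
  obtain e where "e \<in> EF" using \<open>EF \<noteq> {}\<close> by blast
  then have "e \<subseteq> VF" "card e = k" using kg unfolding kgraph_def by auto
  then have "VF \<noteq> {}" using \<open>1 \<le> k\<close> by auto
  have margin: "2 * repair_margin p \<alpha> (card EF) \<le> p * \<alpha> / 2"
    "2 * repair_margin p \<alpha> (card EF) \<le> (1 - p) * (\<alpha> / 2) ^ card EF"
    unfolding repair_margin_def by simp_all
  consider "\<bar>t_inj VF EF n H - p\<bar> \<le> \<delta>" | "p + \<delta> < t_inj VF EF n H" | "t_inj VF EF n H < p - \<delta>"
    unfolding abs_le_iff by linarith
  then show ?thesis
  proof cases
    case 1
    then show ?thesis using HK \<open>0 < \<alpha>\<close> by (intro exI[of _ H]) auto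
  next
    case 2
    then show ?thesis using near margin(1)
      by (intro repair_from_above[OF fin kg \<open>VF \<noteq> {}\<close> assms(3,4,5,7,8) vn step big HK])
        (simp_all add: abs_le_iff)
  next
    case 3
    then show ?thesis using near margin(2)
      by (intro repair_from_below[OF fin kg \<open>VF \<noteq> {}\<close> assms(3,4,6,7,8) vn step big HK])
        (simp_all add: abs_le_iff)
  qed
qed

lemma far_imp_t_inj_far:
  assumes fin: "finite VF" and kg: "kgraph k VF EF" and "EF \<noteq> {}" "1 \<le> k"
    and "0 \<le> p" "p \<le> 1" "0 \<le> \<delta>" "0 < \<alpha>"
    and "card VF \<le> n" "real (card VF) / real n \<le> 2 * \<delta>"
    and "2 * (real (card EF) + 1) \<le> \<alpha> * real (n choose k)"
    and H: "kgraph k {0..<n} H" and far: "far k (\<lambda>n H. \<bar>t_inj VF EF n H - p\<bar> \<le> \<delta>) \<alpha> n H"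
  shows "\<delta> + 2 * repair_margin p \<alpha> (card EF) < \<bar>t_inj VF EF n H - p\<bar>"
proof (rule ccontr)
  assume "\<not> ?thesis"
  then obtain G where G: "G \<subseteq> ksets n k" "\<bar>t_inj VF EF n G - p\<bar> \<le> \<delta>"
      "real (card ((G - H) \<union> (H - G))) \<le> \<alpha> * real (n choose k)"
    using t_inj_repair[OF assms(1-11) H[unfolded kgraph_iff_subset_ksets]] by force
  from G(1) have "kgraph k {0..<n} G" unfolding kgraph_iff_subset_ksets .
  with G(2,3) far show False unfolding far_def by blast
qed

section \<open>Testers\<close>

definition is_tester :: "nat \<Rightarrow> (nat \<Rightarrow> nat set set \<Rightarrow> bool) \<Rightarrow> real \<Rightarrow> nat \<Rightarrow> nat \<Rightarrow> qtree pmf \<Rightarrow> bool" where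
  "is_tester k P \<alpha> n q A \<longleftrightarrow>
     (\<forall>t\<in>set_pmf A. valid_queries n k t \<and> depth t \<le> q) \<and>
     (\<forall>H. kgraph k {0..<n} H \<longrightarrow>
        (P n H \<longrightarrow> measure_pmf.prob A {t. run t H} \<ge> 2/3) \<and>
        (far k P \<alpha> n H \<longrightarrow> measure_pmf.prob A {t. \<not> run t H} \<ge> 2/3))"

lemma testable_iff_is_tester:
  "testable k P \<longleftrightarrow> (\<exists>q. \<forall>n \<alpha>. 0 < \<alpha> \<and> \<alpha> < 1 \<longrightarrow> (\<exists>A. is_tester k P \<alpha> n (q \<alpha>) A))"
  unfolding testable_def is_tester_def ..

lemma is_tester_mono: "is_tester k P \<alpha> n q A \<Longrightarrow> q \<le> q' \<Longrightarrow> is_tester k P \<alpha> n q' A"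
  unfolding is_tester_def by fastforce

lemma not_far_if_holds: "kgraph k {0..<n} H \<Longrightarrow> P n H \<Longrightarrow> 0 \<le> \<alpha> \<Longrightarrow> \<not> far k P \<alpha> n H"
  unfolding far_def by auto

lemma deterministic_tester:
  assumes "\<And>H. kgraph k {0..<n} H \<Longrightarrow> run T H = P n H" "valid_queries n k T" "0 \<le> \<alpha>"
  shows "is_tester k P \<alpha> n (depth T) (return_pmf T)"
  unfolding is_tester_def using assms not_far_if_holds[of k n _ P \<alpha>] by (auto simp: indicator_def)

lemma exhaustive_tester: "0 \<le> \<alpha> \<Longrightarrow> n choose k \<le> q \<Longrightarrow> \<exists>A. is_tester k P \<alpha> n q A"
proof -
  assume "0 \<le> \<alpha>" "n choose k \<le> q"
  obtain L where L: "set L = ksets n k" "distinct L"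
    using finite_distinct_list[OF finite_ksets] by blast
  then have "length L = n choose k" using distinct_card card_ksets by metis
  have "run (query_tree L (P n) {}) H = P n H" if "kgraph k {0..<n} H" for H
    using that L(1) unfolding kgraph_iff_subset_ksets run_query_tree by (simp add: Int_absorb2)
  moreover have "valid_queries n k (query_tree L (P n) {})"
    using L(1) by (intro valid_queries_query_tree) (simp add: ksets_def)
  ultimately have "is_tester k P \<alpha> n (depth (query_tree L (P n) {})) (return_pmf (query_tree L (P n) {}))"
    using \<open>0 \<le> \<alpha>\<close> by (rule deterministic_tester)
  moreover have "depth (query_tree L (P n) {}) \<le> q"
    using depth_query_tree \<open>length L = n choose k\<close> \<open>n choose k \<le> q\<close> by (metis order_trans)
  ultimately show ?thesis using is_tester_mono by blast
qed

lemma testable_const: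
  assumes "\<And>n H. P n H = P n {}"
  shows "testable k P"
  unfolding testable_iff_is_tester
proof (intro exI[of _ "\<lambda>_. 0"] allI impI)
  fix n :: nat and \<alpha> :: real assume "0 < \<alpha> \<and> \<alpha> < 1"
  then have "is_tester k P \<alpha> n (depth (Leaf (P n {}))) (return_pmf (Leaf (P n {})))"
    using assms by (intro deterministic_tester) auto
  then show "\<exists>A. is_tester k P \<alpha> n 0 A" by auto
qed

lemma map_pmf_of_set_eq_bernoulli:
  assumes "finite I" "I \<noteq> {}"
  shows "map_pmf V (pmf_of_set I) = bernoulli_pmf (real (card {f\<in>I. V f}) / real (card I))"
proof (rule pmf_eqI)
  define q where "q = real (card {f\<in>I. V f}) / real (card I)"
  have "card {f\<in>I. V f} \<le> card I" using assms(1) by (intro card_mono) auto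
  then have q: "0 \<le> q" "q \<le> 1" unfolding q_def using assms by (auto simp: divide_le_eq_1 card_gt_0_iff)
  have "pmf (map_pmf V (pmf_of_set I)) True = q"
    unfolding pmf_map q_def using assms by (simp add: measure_pmf_of_set Int_def vimage_def)
  then show "pmf (map_pmf V (pmf_of_set I)) b = pmf (bernoulli_pmf q) b" for b
    using q pmf_False_conv_True[of "map_pmf V (pmf_of_set I)"] by (cases b) simp_all
qed

definition sample_queries :: "'a set list \<Rightarrow> nat \<Rightarrow> (nat \<Rightarrow> 'a \<Rightarrow> nat) \<Rightarrow> nat set list" where
  "sample_queries EL m fs = concat (map (\<lambda>i. map (\<lambda>e. fs i ` e) EL) [0..<m])"

definition count_copies :: "'a set set \<Rightarrow> nat \<Rightarrow> (nat \<Rightarrow> 'a \<Rightarrow> nat) \<Rightarrow> nat set set \<Rightarrow> nat" where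
  "count_copies EF m fs H = card {i\<in>{..<m}. maps_edges EF H (fs i)}"

text \<open>The default value of the product distribution is irrelevant: only the injections with index
  below m are used.\<close>
definition sampler :: "'a set \<Rightarrow> 'a set list \<Rightarrow> nat \<Rightarrow> nat \<Rightarrow> (nat \<Rightarrow> bool) \<Rightarrow> qtree pmf" where
  "sampler VF EL n m accept =
     map_pmf (\<lambda>fs. query_tree (sample_queries EL m fs) (\<lambda>S. accept (count_copies (set EL) m fs S)) {})
       (Pi_pmf {..<m} (SOME f. f \<in> inj_maps VF n) (\<lambda>_. pmf_of_set (inj_maps VF n)))"

lemma sampler_support:
  assumes fin: "finite VF" and kg: "kgraph k VF (set EL)" and vn: "card VF \<le> n"
    and t: "t \<in> set_pmf (sampler VF EL n m accept)"
  shows "valid_queries n k t \<and> depth t \<le> m * length EL"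
proof -
  define I where "I = inj_maps VF n"
  have "I \<noteq> {}" "finite I" unfolding I_def using inj_maps_nonempty[OF fin vn] finite_inj_maps[OF fin] by auto
  obtain fs where fs: "fs \<in> set_pmf (Pi_pmf {..<m} (SOME f. f \<in> I) (\<lambda>_. pmf_of_set I))"
    and t: "t = query_tree (sample_queries EL m fs) (\<lambda>S. accept (count_copies (set EL) m fs S)) {}"
    using t unfolding sampler_def I_def by auto
  have "fs i \<in> I" if "i < m" for i
    using fs that \<open>I \<noteq> {}\<close> \<open>finite I\<close> by (auto simp: set_Pi_pmf PiE_dflt_def)
  then have "\<forall>e\<in>set (sample_queries EL m fs). e \<in> ksets n k"
    using image_edge_in_ksets[OF kg] unfolding sample_queries_def I_def by auto
  then have "\<forall>e\<in>set (sample_queries EL m fs). e \<subseteq> {0..<n} \<and> card e = k"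
    unfolding ksets_def by blast
  moreover have "length (sample_queries EL m fs) = m * length EL"
    unfolding sample_queries_def by (simp add: length_concat comp_def sum_list_triv)
  ultimately show ?thesis unfolding t using depth_query_tree valid_queries_query_tree by metis
qed

lemma run_sample_tree:
  "run (query_tree (sample_queries EL m fs) (\<lambda>S. accept (count_copies (set EL) m fs S)) {}) H =
    accept (count_copies (set EL) m fs H)"
proof -
  have "count_copies (set EL) m fs (H \<inter> set (sample_queries EL m fs)) = count_copies (set EL) m fs H"
    unfolding count_copies_def maps_edges_def sample_queries_def by (rule arg_cong[where f = card]) force
  then show ?thesis unfolding run_query_tree by simp
qed

lemma count_copies_binomial:
  assumes fin: "finite VF" and vn: "card VF \<le> n"
  shows "map_pmf (\<lambda>fs. count_copies (set EL) m fs H) (Pi_pmf {..<m} dflt (\<lambda>_. pmf_of_set (inj_maps VF n))) =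
    binomial_pmf m (t_inj VF (set EL) n H)"
proof -
  define I where "I = inj_maps VF n"
  define V where "V = maps_edges (set EL) H"
  have "map_pmf (\<lambda>fs. count_copies (set EL) m fs H) (Pi_pmf {..<m} dflt (\<lambda>_. pmf_of_set I)) =
      map_pmf (\<lambda>g. card {i\<in>{..<m}. g i}) (map_pmf (\<lambda>fs. V \<circ> fs) (Pi_pmf {..<m} dflt (\<lambda>_. pmf_of_set I)))"
    unfolding map_pmf_comp count_copies_def V_def by simp
  also have "map_pmf (\<lambda>fs. V \<circ> fs) (Pi_pmf {..<m} dflt (\<lambda>_. pmf_of_set I)) =
      Pi_pmf {..<m} (V dflt) (\<lambda>_. map_pmf V (pmf_of_set I))"
    by (rule Pi_pmf_map[symmetric]) auto
  also have "map_pmf V (pmf_of_set I) = bernoulli_pmf (t_inj VF (set EL) n H)"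
    unfolding t_inj_eq_card_copies[OF fin] copies_def V_def I_def
    using map_pmf_of_set_eq_bernoulli inj_maps_nonempty[OF fin vn] finite_inj_maps[OF fin] by metis
  also have "map_pmf (\<lambda>g. card {i\<in>{..<m}. g i})
      (Pi_pmf {..<m} (V dflt) (\<lambda>_. bernoulli_pmf (t_inj VF (set EL) n H))) =
      binomial_pmf m (t_inj VF (set EL) n H)"
    by (rule binomial_pmf_altdef'[symmetric]) (auto simp: t_inj_nonneg[OF fin] t_inj_le_1[OF fin])
  finally show ?thesis unfolding I_def .
qed

lemma prob_sampler:
  assumes fin: "finite VF" and vn: "card VF \<le> n"
  shows "measure_pmf.prob (sampler VF EL n m accept) {t. Q (run t H)} =
    measure_pmf.prob (binomial_pmf m (t_inj VF (set EL) n H)) {x. Q (accept x)}"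
proof -
  define D where "D = Pi_pmf {..<m} (SOME f. f \<in> inj_maps VF n) (\<lambda>_. pmf_of_set (inj_maps VF n))"
  define T where "T fs = query_tree (sample_queries EL m fs) (\<lambda>S. accept (count_copies (set EL) m fs S)) {}"
    for fs
  have "measure_pmf.prob (sampler VF EL n m accept) {t. Q (run t H)} =
      measure_pmf.prob D (T -` {t. Q (run t H)})"
    unfolding sampler_def D_def[symmetric] T_def[symmetric] by (simp only: measure_map_pmf)
  also have "T -` {t. Q (run t H)} = (\<lambda>fs. count_copies (set EL) m fs H) -` {x. Q (accept x)}"
    by (auto simp: T_def run_sample_tree)
  also have "measure_pmf.prob D \<dots> = measure_pmf.prob (binomial_pmf m (t_inj VF (set EL) n H)) {x. Q (accept x)}"
    unfolding D_def
    by (simp only: measure_map_pmf count_copies_binomial[OF fin vn, where dflt = "SOME f. f \<in> inj_maps VF n", symmetric])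
  finally show ?thesis .
qed

lemma binomial_deviation_le_third:
  assumes "0 < m" "0 \<le> q" "q \<le> 1" "0 < \<gamma>" "2 \<le> real m * \<gamma>\<^sup>2"
  shows "measure_pmf.prob (binomial_pmf m q) {x. \<gamma> \<le> \<bar>real x / real m - q\<bar>} \<le> 1/3"
proof -
  have "binomial_distribution q" by unfold_locales (use assms in auto)
  then have "measure_pmf.prob (binomial_pmf m q) {x. \<gamma> \<le> \<bar>real x / real m - q\<bar>}
      \<le> 2 * exp (- (2 * real m * \<gamma>\<^sup>2))"
    using binomial_distribution.prob_abs_ge'[of q m \<gamma>] assms by simp
  also have "\<dots> \<le> 2 * exp (- 4)" using assms(5) by (simp add: mult.assoc)
  also have "\<dots> \<le> 1/3"
  proof -
    have "3 \<le> exp (2::real)" using exp_ge_add_one_self[of 2] by simp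
    then have "3 * 3 \<le> exp (2::real) * exp 2" by (intro mult_mono) auto
    then show ?thesis by (simp add: exp_minus field_simps flip: exp_add)
  qed
  finally show ?thesis .
qed

lemma prob_Collect_not: "measure_pmf.prob M {x. \<not> R x} = 1 - measure_pmf.prob M {x. R x}"
  using measure_pmf.prob_compl[of "{x. R x}" M] by (simp add: Compl_eq_Diff_UNIV[symmetric] Collect_neg_eq)

lemma sampling_tester:
  fixes EL :: "'a set list"
  assumes fin: "finite VF" and kg: "kgraph k VF (set EL)" and vn: "card VF \<le> n"
    and "0 < m" "0 < \<gamma>" "2 \<le> real m * \<gamma>\<^sup>2"
    and gap: "\<And>H. kgraph k {0..<n} H \<Longrightarrow> far k (\<lambda>n H. \<bar>t_inj VF (set EL) n H - p\<bar> \<le> \<delta>) \<alpha> n H \<Longrightarrow>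
      \<delta> + 2 * \<gamma> < \<bar>t_inj VF (set EL) n H - p\<bar>"
  shows "is_tester k (\<lambda>n H. \<bar>t_inj VF (set EL) n H - p\<bar> \<le> \<delta>) \<alpha> n (m * length EL)
    (sampler VF EL n m (\<lambda>x. \<bar>real x / real m - p\<bar> \<le> \<delta> + \<gamma>))"
  unfolding is_tester_def
proof (intro conjI allI impI ballI)
  define accept where "accept x \<longleftrightarrow> \<bar>real x / real m - p\<bar> \<le> \<delta> + \<gamma>" for x :: nat
  fix H assume H: "kgraph k {0..<n} H"
  define q where "q = t_inj VF (set EL) n H"
  define D where "D = binomial_pmf m q"
  have deviation: "measure_pmf.prob D {x. \<gamma> \<le> \<bar>real x / real m - q\<bar>} \<le> 1/3"
    unfolding D_def q_def using assms(4-6) t_inj_nonneg[OF fin] t_inj_le_1[OF fin]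
    by (intro binomial_deviation_le_third) simp_all
  have sampler_D: "measure_pmf.prob (sampler VF EL n m accept) {t. R (run t H)} =
      measure_pmf.prob D {x. R (accept x)}" for R
    unfolding D_def q_def by (rule prob_sampler[OF fin vn])
  show "2/3 \<le> measure_pmf.prob (sampler VF EL n m accept) {t. run t H}"
    if "\<bar>t_inj VF (set EL) n H - p\<bar> \<le> \<delta>"
  proof -
    have "{x. \<not> accept x} \<subseteq> {x. \<gamma> \<le> \<bar>real x / real m - q\<bar>}"
      using that unfolding accept_def q_def by auto
    then have "measure_pmf.prob D {x. \<not> accept x} \<le> measure_pmf.prob D {x. \<gamma> \<le> \<bar>real x / real m - q\<bar>}"
      by (rule measure_pmf.finite_measure_mono) simp
    then have "measure_pmf.prob D {x. \<not> accept x} \<le> 1/3" using deviation by linarith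
    then show ?thesis using sampler_D[of "\<lambda>b. b"] prob_Collect_not[of D accept] by simp
  qed
  show "2/3 \<le> measure_pmf.prob (sampler VF EL n m accept) {t. \<not> run t H}"
    if "far k (\<lambda>n H. \<bar>t_inj VF (set EL) n H - p\<bar> \<le> \<delta>) \<alpha> n H"
  proof -
    have "{x. accept x} \<subseteq> {x. \<gamma> \<le> \<bar>real x / real m - q\<bar>}"
      using gap[OF H that] unfolding accept_def q_def by auto
    then have "measure_pmf.prob D {x. accept x} \<le> measure_pmf.prob D {x. \<gamma> \<le> \<bar>real x / real m - q\<bar>}"
      by (rule measure_pmf.finite_measure_mono) simp
    then have "measure_pmf.prob D {x. accept x} \<le> 1/3" using deviation by linarith
    then show ?thesis using sampler_D[of "\<lambda>b. \<not> b"] prob_Collect_not[of D accept] by simp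
  qed
qed (use sampler_support[OF fin kg vn] in blast)+

lemma large_host_bounds:
  assumes "1 \<le> k" "k \<le> v" "0 < \<delta>" "0 < \<alpha>"
    and n: "real v + real v / \<delta> + 2 * (real E + 1) * real k / \<alpha> \<le> real n"
  shows "v \<le> n" "real v / real n \<le> 2 * \<delta>" "2 * (real E + 1) \<le> \<alpha> * real (n choose k)"
proof -
  have nonneg: "0 \<le> real v / \<delta>" "0 \<le> 2 * (real E + 1) * real k / \<alpha>"
    using assms(3,4) by simp_all
  show "v \<le> n" using n nonneg by linarith
  then have "0 < real n" using assms(1,2) by simp
  have "real v / \<delta> \<le> real n" using n nonneg by linarith
  then show "real v / real n \<le> 2 * \<delta>" using \<open>0 < real n\<close> assms(3) by (simp add: field_simps)
  have "k \<le> n" using \<open>v \<le> n\<close> assms(2) by simp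
  then have "real n / real k \<le> (real n / real k) ^ k"
    using assms(1) by (intro self_le_power) simp_all
  also have "\<dots> \<le> real (n choose k)" by (rule binomial_ge_n_over_k_pow_k[OF \<open>k \<le> n\<close>])
  finally have "real n / real k \<le> real (n choose k)" .
  moreover have "2 * (real E + 1) \<le> \<alpha> * (real n / real k)"
  proof -
    have "2 * (real E + 1) * real k / \<alpha> \<le> real n" using n nonneg by linarith
    then have "2 * (real E + 1) * real k \<le> \<alpha> * real n" using assms(4) by (simp add: field_simps)
    then show ?thesis using assms(1) by (simp add: field_simps)
  qed
  ultimately show "2 * (real E + 1) \<le> \<alpha> * real (n choose k)"
    using assms(4) by (meson mult_left_mono less_imp_le order_trans)
qed

lemma large_host_tester:
  fixes VF :: "'a set"
  assumes fin: "finite VF" and kg: "kgraph k VF EF" and "EF \<noteq> {}" "1 \<le> k"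
    and "0 < p" "p < 1" "0 < \<delta>" "0 < \<alpha>"
    and n: "real (card VF) + real (card VF) / \<delta> + 2 * (real (card EF) + 1) * real k / \<alpha> \<le> real n"
    and q: "nat \<lceil>2 / (repair_margin p \<alpha> (card EF))\<^sup>2\<rceil> * card EF \<le> q"
  shows "\<exists>A. is_tester k (\<lambda>n H. \<bar>t_inj VF EF n H - p\<bar> \<le> \<delta>) \<alpha> n q A"
proof -
  define \<gamma> where "\<gamma> = repair_margin p \<alpha> (card EF)"
  define m where "m = nat \<lceil>2 / \<gamma>\<^sup>2\<rceil>"
  have "0 < \<gamma>" unfolding \<gamma>_def using assms(5,6,8) by (rule repair_margin_pos)
  have "2 / \<gamma>\<^sup>2 \<le> real m" unfolding m_def by (rule real_nat_ceiling_ge)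
  then have "2 \<le> real m * \<gamma>\<^sup>2" using \<open>0 < \<gamma>\<close> by (simp add: divide_le_eq)
  then have "0 < m" by (cases m) simp_all
  obtain EL where EL: "set EL = EF" "distinct EL" using finite_distinct_list[OF finite_kgraph[OF fin kg]] by blast
  have "k \<le> card VF" using \<open>EF \<noteq> {}\<close> kgraph_edge_size_le[OF fin kg] by blast
  note bounds = large_host_bounds[OF \<open>1 \<le> k\<close> this \<open>0 < \<delta>\<close> \<open>0 < \<alpha>\<close> n]
  have kg_EL: "kgraph k VF (set EL)" using kg EL(1) by simp
  have gap: "\<delta> + 2 * \<gamma> < \<bar>t_inj VF (set EL) n H - p\<bar>"
    if "kgraph k {0..<n} H" "far k (\<lambda>n H. \<bar>t_inj VF (set EL) n H - p\<bar> \<le> \<delta>) \<alpha> n H" for H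
    using far_imp_t_inj_far[OF fin kg assms(3,4) _ _ _ \<open>0 < \<alpha>\<close> bounds] that assms(5-7)
    unfolding EL(1) \<gamma>_def by simp
  have "is_tester k (\<lambda>n H. \<bar>t_inj VF (set EL) n H - p\<bar> \<le> \<delta>) \<alpha> n (m * length EL)
      (sampler VF EL n m (\<lambda>x. \<bar>real x / real m - p\<bar> \<le> \<delta> + \<gamma>))"
    using sampling_tester[OF fin kg_EL bounds(1) \<open>0 < m\<close> \<open>0 < \<gamma>\<close> \<open>2 \<le> real m * \<gamma>\<^sup>2\<close> gap] .
  moreover have "m * length EL \<le> q" using q distinct_card[OF EL(2)] EL(1) unfolding m_def \<gamma>_def by simp
  ultimately show ?thesis unfolding EL(1) using is_tester_mono by blast
qed

theorem corollary11p1: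
  fixes p \<delta> :: real and k :: nat and VF :: "'a set" and EF :: "'a set set"
  assumes "0 < p" "p < 1" "0 < \<delta>" "\<delta> < 1" "k \<ge> 2"
    and "finite VF" "kgraph k VF EF"
  shows "testable k (\<lambda>n H. \<bar>t_inj VF EF n H - p\<bar> \<le> \<delta>)"
proof (cases "EF = {}")
  case True
  show ?thesis by (rule testable_const) (simp only: True t_inj_no_edges)
next
  case nonempty: False
  define N where "N \<alpha> = nat \<lceil>real (card VF) + real (card VF) / \<delta> + 2 * (real (card EF) + 1) * real k / \<alpha>\<rceil>"
    for \<alpha>
  define q where "q \<alpha> = max (2 ^ N \<alpha>) (nat \<lceil>2 / (repair_margin p \<alpha> (card EF))\<^sup>2\<rceil> * card EF)" for \<alpha>
  have "\<exists>A. is_tester k (\<lambda>n H. \<bar>t_inj VF EF n H - p\<bar> \<le> \<delta>) \<alpha> n (q \<alpha>) A" if "0 < \<alpha>" for n \<alpha>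
  proof (cases "n < N \<alpha>")
    case True
    then have "(2::nat) ^ n \<le> 2 ^ N \<alpha>" by (intro power_increasing) simp_all
    then have "n choose k \<le> q \<alpha>" unfolding q_def using binomial_le_pow2[of n k] by linarith
    then show ?thesis using exhaustive_tester \<open>0 < \<alpha>\<close> by (simp add: less_imp_le)
  next
    case False
    then have "real (card VF) + real (card VF) / \<delta> + 2 * (real (card EF) + 1) * real k / \<alpha> \<le> real n"
      unfolding N_def by (simp add: nat_ceiling_le_eq not_less)
    then show ?thesis
      using large_host_tester[OF assms(6,7) nonempty _ assms(1-3) \<open>0 < \<alpha>\<close> _ max.cobounded2] assms(5)
      unfolding q_def by simp
  qed
  then show ?thesis unfolding testable_iff_is_tester by blast
qed

end
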